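(* Let $a,b,\alpha>0$ and let $f_{a,b,\alpha}$, $\widetilde{f}_{a,b,\alpha}$ and $F_{a,b,\alpha}$ be as defined in the context. Then: (a) $u\mapsto u\widetilde{f}'_{a,b,\alpha}(u)/\widetilde{f}_{a,b,\alpha}(u)$ is strictly decreasing on $(0,\infty)$; (b) $u\mapsto u{f}'_{a,b,\alpha}(u)/{f}_{a,b,\alpha}(u)$ is strictly decreasing on $(0,\infty)$; (c) $u\mapsto u{F}'_{a,b,\alpha}(u)/{F}_{a,b,\alpha}(u)$ is strictly decreasing on $(0,\infty)$; (d) $u\mapsto {F}'_{a,b,\alpha}(u)/{F}_{a,b,\alpha}(u)$ is strictly decreasing on $(0,\infty)$ (i.e. $F_{a,b,\alpha}$ is strictly log-concave).
   Context: $K_\nu$ denotes the modified Bessel function of the second kind, $K_{\nu}(u)=\int_0^{\infty}e^{-u\cosh t}\cosh(\nu t)\,dt$ for $u>0$. The gamma-gamma probability density function with parameters $a,b,\alpha>0$ is $f_{a,b,\alpha}:(0,\infty)\to(0,\infty)$, $$f_{a,b,\alpha}(u)=\frac{2(ab)^{\frac{a+b}{2}}u^{\frac{a+b}{2}-1}}{\Gamma(a)\Gamma(b)\alpha^{\frac{a+b}{2}}}K_{a-b}\left(2\sqrt{\frac{ab}{\alpha}u}\right).$$ Define $\widetilde{f}_{a,b,\alpha}(u)=f_{a,b,\alpha}\left(\frac{\alpha u^2}{4ab}\right)=\frac{2^{3-(a+b)}ab\,u^{a+b-2}}{\alpha\Gamma(a)\Gamma(b)}K_{a-b}(u)$ for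 $u>0$, and the cumulative distribution function $F_{a,b,\alpha}(u)=\int_0^u f_{a,b,\alpha}(t)\,dt$ for $u>0$. *)

theory Defs
  imports "HOL-Analysis.Analysis"
begin

definition besselK :: "real \<Rightarrow> real \<Rightarrow> real" where
  "besselK \<nu> u = integral {0..} (\<lambda>t. exp (- u * cosh t) * cosh (\<nu> * t))"

definition gg_pdf :: "real \<Rightarrow> real \<Rightarrow> real \<Rightarrow> real \<Rightarrow> real" where
  "gg_pdf a b \<alpha> u =
     2 * (a * b) powr ((a + b) / 2) * u powr ((a + b) / 2 - 1)
       / (Gamma a * Gamma b * \<alpha> powr ((a + b) / 2))
     * besselK (a - b) (2 * sqrt (a * b / \<alpha> * u))"

definition gg_pdf_tilde :: "real \<Rightarrow> real \<Rightarrow> real \<Rightarrow> real \<Rightarrow> real" where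
  "gg_pdf_tilde a b \<alpha> u = gg_pdf a b \<alpha> (\<alpha> * u\<^sup>2 / (4 * a * b))"

definition gg_cdf :: "real \<Rightarrow> real \<Rightarrow> real \<Rightarrow> real \<Rightarrow> real" where
  "gg_cdf a b \<alpha> u = integral {0..u} (gg_pdf a b \<alpha>)"

end

theory Submission
  imports Defs
begin

text \<open>Write e g u = u g'(u) / g(u) for the elasticity of g. Let K_k(x) be the integral defining
  K_\<nu>(x) with an extra factor cosh^k t in the integrand, so that K_0 = K_\<nu> and K_k' = - K_(k+1), and
  let S(x) be the same integral with cosh (\<nu> t) replaced by sinh t sinh (\<nu> t). Integration by parts
  gives x S = \<nu> K_0 and x K_2 = x K_0 + K_1 + \<nu> S, hence (e K_\<nu>)'(x) = x (K_0^2 + S^2 - K_1^2) / K_0^2.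
  This is negative: integrating the pointwise Cauchy-Schwarz bound
  A cosh (\<nu> t) + B sinh t sinh (\<nu> t) < sqrt (A^2 + B^2) cosh t cosh (\<nu> t)  (t \<noteq> 0)
  with A = K_0 and B = S gives K_1 > sqrt (K_0^2 + S^2).

  Since f u = c u^((a + b)/2 - 1) K_(a-b) (2 sqrt (a b u / \<alpha>)), the elasticity of f is
  (a + b)/2 - 1 + (e K_(a-b)) (2 sqrt (a b u / \<alpha>)) / 2, which gives (b); (a) follows from
  (e f~) u = 2 (e f) (\<alpha> u^2 / (4 a b)). For (c), H t = t f t - (1 + (e f) u) F t vanishes at 0 and
  has derivative f t ((e f) t - (e f) u) > 0 on (0, u), so u f u > (1 + (e f) u) F u, which is the sign
  of the derivative of e F = (\<lambda>u. u f u / F u) at u. Finally F'/F = (e F) u / u with e F > 0, so (d)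
  follows from (c).\<close>

section \<open>Exponential decay on \<open>[0, \<infinity>)\<close>\<close>

lemma powr_le_exp:
  fixes m z :: real
  assumes "m > 0" "z \<ge> 0"
  shows "z powr m \<le> m powr m * exp z"
proof -
  have "z / m \<le> exp (z / m)"
    using exp_ge_add_one_self[of "z / m"] by linarith
  then have "(z / m) powr m \<le> exp (z / m) powr m"
    using assms by (intro powr_mono2) auto
  also have "exp (z / m) powr m = exp z"
    using assms by (simp add: powr_def)
  finally show ?thesis
    using assms by (simp add: powr_divide divide_simps mult.commute)
qed

lemma exp_neg_mult_cosh_le:
  fixes x r s :: real
  assumes "x > 0" "r > 0" "s \<ge> 0"
  shows "exp (- x * cosh s) \<le> r powr r * (x / 2) powr (- r) * exp (- r * s)"
proof -
  define z where "z = x * cosh s"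
  have "exp s / 2 \<le> cosh s"
    unfolding cosh_field_def using exp_gt_zero[of "- s"] by simp
  then have z_ge: "(x / 2) * exp s \<le> z"
    unfolding z_def using assms(1) mult_left_mono[of "exp s / 2" "cosh s" x] by simp
  moreover have "(x / 2) * exp s > 0"
    using assms(1) by simp
  ultimately have z_pos: "z > 0"
    by linarith
  have "exp (- z) = 1 / exp z"
    by (simp add: exp_minus field_simps)
  also have "\<dots> \<le> r powr r / z powr r"
    using powr_le_exp[of r z] assms z_pos by (simp add: divide_simps)
  also have "\<dots> = r powr r * z powr (- r)"
    by (simp add: powr_minus divide_inverse)
  also have "\<dots> \<le> r powr r * ((x / 2) * exp s) powr (- r)"
    using z_ge assms by (intro mult_left_mono powr_mono2') auto
  also have "\<dots> = r powr r * ((x / 2) powr (- r) * exp s powr (- r))"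
    using assms by (subst powr_mult) auto
  also have "exp s powr (- r) = exp (- r * s)"
    by (simp add: powr_def)
  finally show ?thesis
    by (simp add: z_def mult.assoc)
qed

definition exp_decaying :: "(real \<Rightarrow> real) \<Rightarrow> bool" where
  "exp_decaying h \<longleftrightarrow> (\<exists>C. \<forall>s\<ge>0. \<bar>h s\<bar> \<le> C * exp (- s))"

lemma exp_decayingI: "(\<And>s. s \<ge> 0 \<Longrightarrow> \<bar>h s\<bar> \<le> C * exp (- s)) \<Longrightarrow> exp_decaying h"
  unfolding exp_decaying_def by blast

lemma exp_decaying_mono:
  assumes "exp_decaying g" "\<And>s. s \<ge> 0 \<Longrightarrow> \<bar>h s\<bar> \<le> \<bar>g s\<bar>"
  shows "exp_decaying h"
proof -
  obtain C where C: "\<forall>s\<ge>0. \<bar>g s\<bar> \<le> C * exp (- s)"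
    using assms(1) unfolding exp_decaying_def by blast
  show ?thesis
    using assms(2) C by (intro exp_decayingI[of _ C]) (metis order_trans)
qed

lemma exp_decaying_add:
  assumes "exp_decaying g" "exp_decaying h"
  shows "exp_decaying (\<lambda>s. g s + h s)"
proof -
  obtain C D where C: "\<forall>s\<ge>0. \<bar>g s\<bar> \<le> C * exp (- s)" and D: "\<forall>s\<ge>0. \<bar>h s\<bar> \<le> D * exp (- s)"
    using assms unfolding exp_decaying_def by blast
  have "\<bar>g s + h s\<bar> \<le> (C + D) * exp (- s)" if "s \<ge> 0" for s
    using abs_triangle_ineq[of "g s" "h s"] C[rule_format, OF that] D[rule_format, OF that]
    unfolding distrib_right by linarith
  then show ?thesis
    by (rule exp_decayingI)
qed

lemma exp_decaying_cmult:
  assumes "exp_decaying h"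
  shows "exp_decaying (\<lambda>s. c * h s)"
proof -
  obtain C where "\<forall>s\<ge>0. \<bar>h s\<bar> \<le> C * exp (- s)"
    using assms unfolding exp_decaying_def by blast
  then have "\<bar>c * h s\<bar> \<le> (\<bar>c\<bar> * C) * exp (- s)" if "s \<ge> 0" for s
    using that by (simp add: abs_mult mult.assoc mult_left_mono)
  then show ?thesis
    by (rule exp_decayingI)
qed

lemma exp_decaying_diff:
  assumes "exp_decaying g" "exp_decaying h"
  shows "exp_decaying (\<lambda>s. g s - h s)"
  using exp_decaying_add[OF assms(1) exp_decaying_cmult[OF assms(2), of "- 1"]] by simp

lemma exp_decaying_imp_tendsto_0:
  assumes "exp_decaying h"
  shows "(h \<longlongrightarrow> 0) at_top"
proof -
  obtain C where C: "\<forall>s\<ge>0. \<bar>h s\<bar> \<le> C * exp (- s)"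
    using assms unfolding exp_decaying_def by blast
  have "\<forall>\<^sub>F s in at_top. norm (h s) \<le> C * exp (- s)"
    using eventually_ge_at_top[of "0::real"] by eventually_elim (use C in auto)
  moreover have "((\<lambda>s::real. exp (- s)) \<longlongrightarrow> 0) at_top"
    using filterlim_compose[OF exp_at_bot filterlim_uminus_at_bot_at_top] by simp
  then have "((\<lambda>s. C * exp (- s)) \<longlongrightarrow> 0) at_top"
    using tendsto_mult_right_zero by blast
  ultimately show ?thesis
    by (rule Lim_null_comparison)
qed

lemma exp_decaying_integrable:
  assumes "exp_decaying h" "continuous_on {0..} h"
  shows "h integrable_on {0..}"
proof -
  obtain C where C: "\<forall>s\<ge>0. \<bar>h s\<bar> \<le> C * exp (- s)"
    using assms unfolding exp_decaying_def by blast
  have meas: "h \<in> borel_measurable (lebesgue_on {0..})"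
    using assms(2) by (intro continuous_imp_measurable_on_sets_lebesgue) auto
  have "((\<lambda>s. C * exp (- s)) has_integral C * 1) {0::real..}"
    using has_integral_mult_right[OF has_integral_exp_minus_to_infinity[of 1 0]] by simp
  then have "(\<lambda>s. C * exp (- s)) integrable_on {0::real..}"
    by (rule has_integral_integrable)
  from measurable_bounded_by_integrable_imp_integrable[OF meas this] show ?thesis
    using C by auto
qed

lemma cosh_power_kernel_exp_decaying:
  fixes x \<nu> :: real
  assumes "x > 0"
  shows "exp_decaying (\<lambda>s. cosh s ^ k * exp (\<bar>\<nu>\<bar> * s) * exp (- x * cosh s))"
proof (rule exp_decayingI)
  fix s :: real
  assume s: "s \<ge> 0"
  define r where "r = real k + \<bar>\<nu>\<bar> + 1"
  have r: "r > 0"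
    unfolding r_def by simp
  have "exp (- s) \<le> exp s"
    using s by simp
  then have "cosh s \<le> exp s"
    unfolding cosh_field_def by simp
  then have "cosh s ^ k \<le> exp s ^ k"
    by (intro power_mono) auto
  then have "cosh s ^ k \<le> exp (real k * s)"
    by (simp add: exp_of_nat_mult)
  then have "cosh s ^ k * exp (\<bar>\<nu>\<bar> * s) * exp (- x * cosh s)
      \<le> exp (real k * s) * exp (\<bar>\<nu>\<bar> * s) * (r powr r * (x / 2) powr (- r) * exp (- r * s))"
    using exp_neg_mult_cosh_le[OF assms r s] by (intro mult_mono) auto
  also have "\<dots> = r powr r * (x / 2) powr (- r) * exp (real k * s + \<bar>\<nu>\<bar> * s + - r * s)"
    by (simp only: exp_add ac_simps)
  also have "real k * s + \<bar>\<nu>\<bar> * s + - r * s = - s"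
    unfolding r_def by (simp add: algebra_simps)
  finally show "\<bar>cosh s ^ k * exp (\<bar>\<nu>\<bar> * s) * exp (- x * cosh s)\<bar>
      \<le> r powr r * (x / 2) powr (- r) * exp (- s)"
    by simp
qed

lemma integral_atLeast_0_pos:
  fixes f :: "real \<Rightarrow> real"
  assumes "continuous_on {0..} f" "f integrable_on {0..}"
    and "\<And>s. s \<ge> 0 \<Longrightarrow> f s \<ge> 0" "\<And>s. s > 0 \<Longrightarrow> f s > 0"
  shows "integral {0..} f > 0"
proof -
  have cont: "continuous_on {0..1} f"
    using assms(1) by (rule continuous_on_subset) auto
  have "0 < integral {0..1} f"
    using integral_less_real[of 0 1 "\<lambda>_. 0" f] cont assms(4) by simp
  also have "\<dots> \<le> integral {0..} f"
    using cont assms(2,3) by (intro integral_subset_le integrable_continuous_real) auto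
  finally show ?thesis .
qed

lemma integral_atLeast_0_derivative_eq_0:
  fixes G h :: "real \<Rightarrow> real"
  assumes G': "\<And>s. s \<ge> 0 \<Longrightarrow> (G has_real_derivative h s) (at s)"
    and h: "continuous_on {0..} h" "exp_decaying h"
    and G: "exp_decaying G" "G 0 = 0"
  shows "integral {0..} h = 0"
proof -
  obtain C where C: "\<forall>s\<ge>0. \<bar>h s\<bar> \<le> C * exp (- s)"
    using h(2) unfolding exp_decaying_def by blast
  define g where "g s = C * exp (- s)" for s :: real
  have g: "(g has_integral C) {0..}"
    using has_integral_mult_right[OF has_integral_exp_minus_to_infinity[of 1 0], of C]
    unfolding g_def by simp
  \<comment> \<open>Adding the dominating exponential makes the integrand nonnegative, so that the
    improper integral is the limit of the integrals over \<open>{0..y}\<close>.\<close>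
  have ftc: "((\<lambda>s. h s + g s) has_integral G y - g y + C) {0..y}" if "y \<ge> 0" for y
  proof -
    have "((\<lambda>s. G s - g s) has_real_derivative h s + g s) (at s)" if "s \<ge> 0" for s
      using G'[OF that] unfolding g_def by (auto intro!: derivative_eq_intros)
    then have "((\<lambda>s. h s + g s) has_integral (G y - g y) - (G 0 - g 0)) {0..y}"
      using \<open>y \<ge> 0\<close>
      by (intro fundamental_theorem_of_calculus)
         (auto simp: has_real_derivative_iff_has_vector_derivative intro: has_vector_derivative_at_within)
    then show ?thesis
      using G(2) by (simp add: g_def)
  qed
  have "((\<lambda>s. h s + g s) has_integral C) {0..}"
  proof (rule has_integral_to_inf)
    show "(\<lambda>s. h s + g s) integrable_on {0..y}" for y
      using h(1) unfolding g_def
      by (intro integrable_continuous_real continuous_intros) (auto elim: continuous_on_subset)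
    show "h s + g s \<ge> 0" if "s \<ge> 0" for s
      using C that unfolding g_def by (auto simp: abs_le_iff)
    have "((\<lambda>y. G y - g y + C) \<longlongrightarrow> 0 - C * 0 + C) at_top"
      using exp_decaying_imp_tendsto_0[OF G(1)]
        exp_decaying_imp_tendsto_0[OF exp_decayingI[of "\<lambda>s. exp (- s)" 1]]
      unfolding g_def by (intro tendsto_add tendsto_diff tendsto_mult tendsto_const) auto
    moreover have "\<forall>\<^sub>F y in at_top. integral {0..y} (\<lambda>s. h s + g s) = G y - g y + C"
      using eventually_ge_at_top[of "0::real"] by eventually_elim (use ftc integral_unique in blast)
    ultimately show "((\<lambda>y. integral {0..y} (\<lambda>s. h s + g s)) \<longlongrightarrow> C) at_top"
      by (simp add: tendsto_cong)
  qed
  from has_integral_diff[OF this g] show ?thesis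
    by (simp add: integral_unique)
qed

section \<open>Integral representations related to \<open>K\<^sub>\<nu>\<close>\<close>

definition besselK_kernel :: "real \<Rightarrow> nat \<Rightarrow> real \<Rightarrow> real \<Rightarrow> real" where
  "besselK_kernel \<nu> k x s = exp (- x * cosh s) * cosh (\<nu> * s) * cosh s ^ k"

definition besselK_moment :: "real \<Rightarrow> nat \<Rightarrow> real \<Rightarrow> real" where
  "besselK_moment \<nu> k x = integral {0..} (besselK_kernel \<nu> k x)"

definition besselK_sinh_kernel :: "real \<Rightarrow> real \<Rightarrow> real \<Rightarrow> real" where
  "besselK_sinh_kernel \<nu> x s = exp (- x * cosh s) * sinh s * sinh (\<nu> * s)"

definition besselK_sinh_moment :: "real \<Rightarrow> real \<Rightarrow> real" where
  "besselK_sinh_moment \<nu> x = integral {0..} (besselK_sinh_kernel \<nu> x)"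

lemma besselK_eq_moment_0: "besselK \<nu> = besselK_moment \<nu> 0"
  by (simp add: fun_eq_iff besselK_def besselK_moment_def besselK_kernel_def[abs_def])

lemma continuous_on_besselK_kernel: "continuous_on A (besselK_kernel \<nu> k x)"
  unfolding besselK_kernel_def by (intro continuous_intros)

lemma continuous_on_besselK_sinh_kernel: "continuous_on A (besselK_sinh_kernel \<nu> x)"
  unfolding besselK_sinh_kernel_def by (intro continuous_intros)

lemma abs_cosh_le_exp_abs: "\<bar>cosh y\<bar> \<le> exp \<bar>y :: real\<bar>"
proof -
  have "exp (- y) \<le> exp \<bar>y\<bar>" "exp y \<le> exp \<bar>y\<bar>"
    by auto
  then have "exp y + exp (- y) \<le> 2 * exp \<bar>y\<bar>"
    by linarith
  then show ?thesis
    unfolding cosh_field_def by simp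
qed

lemma abs_sinh_le_cosh: "\<bar>sinh y\<bar> \<le> cosh (y :: real)"
  using sinh_le_cosh_real[of y] sinh_le_cosh_real[of "- y"] by (simp add: abs_le_iff)

lemma abs_sinh_le_exp_abs: "\<bar>sinh y\<bar> \<le> exp \<bar>y :: real\<bar>"
  using abs_sinh_le_cosh[of y] abs_cosh_le_exp_abs[of y] by simp

lemma besselK_kernel_exp_decaying:
  assumes "x > 0"
  shows "exp_decaying (besselK_kernel \<nu> k x)"
proof (rule exp_decaying_mono[OF cosh_power_kernel_exp_decaying[OF assms, of k \<nu>]])
  fix s :: real
  assume "s \<ge> 0"
  then show "\<bar>besselK_kernel \<nu> k x s\<bar> \<le> \<bar>cosh s ^ k * exp (\<bar>\<nu>\<bar> * s) * exp (- x * cosh s)\<bar>"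
    using abs_cosh_le_exp_abs[of "\<nu> * s"]
    by (simp add: besselK_kernel_def abs_mult mult_left_mono mult_right_mono ac_simps)
qed

lemma besselK_sinh_kernel_exp_decaying:
  assumes "x > 0"
  shows "exp_decaying (besselK_sinh_kernel \<nu> x)"
proof (rule exp_decaying_mono[OF cosh_power_kernel_exp_decaying[OF assms, of 1 \<nu>]])
  fix s :: real
  assume "s \<ge> 0"
  then have "\<bar>sinh s\<bar> * \<bar>sinh (\<nu> * s)\<bar> \<le> cosh s * exp (\<bar>\<nu>\<bar> * s)"
    using abs_sinh_le_exp_abs[of "\<nu> * s"] abs_sinh_le_cosh[of s] by (intro mult_mono) (auto simp: abs_mult)
  then show "\<bar>besselK_sinh_kernel \<nu> x s\<bar> \<le> \<bar>cosh s ^ 1 * exp (\<bar>\<nu>\<bar> * s) * exp (- x * cosh s)\<bar>"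
    by (simp add: besselK_sinh_kernel_def abs_mult mult_left_mono ac_simps)
qed

lemma besselK_kernel_integrable: "x > 0 \<Longrightarrow> besselK_kernel \<nu> k x integrable_on {0..}"
  by (intro exp_decaying_integrable besselK_kernel_exp_decaying continuous_on_besselK_kernel)

lemma besselK_sinh_kernel_integrable: "x > 0 \<Longrightarrow> besselK_sinh_kernel \<nu> x integrable_on {0..}"
  by (intro exp_decaying_integrable besselK_sinh_kernel_exp_decaying continuous_on_besselK_sinh_kernel)

lemma besselK_moment_pos: "x > 0 \<Longrightarrow> besselK_moment \<nu> k x > 0"
  unfolding besselK_moment_def
  by (intro integral_atLeast_0_pos continuous_on_besselK_kernel besselK_kernel_integrable)
     (auto simp: besselK_kernel_def)

lemma exp_minus_1_minus_bounds:
  fixes z :: real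
  shows "0 \<le> exp z - 1 - z" "exp z - 1 - z \<le> z\<^sup>2 / 2 * exp \<bar>z\<bar>"
proof -
  obtain t where t: "\<bar>t\<bar> \<le> \<bar>z\<bar>" "exp z = (\<Sum>m<2. z ^ m / fact m) + exp t / fact 2 * z ^ 2"
    using Maclaurin_exp_le[of z 2] by blast
  then have eq: "exp z - 1 - z = z\<^sup>2 / 2 * exp t"
    by (simp add: numeral_2_eq_2)
  show "0 \<le> exp z - 1 - z"
    unfolding eq by simp
  show "exp z - 1 - z \<le> z\<^sup>2 / 2 * exp \<bar>z\<bar>"
    unfolding eq using t(1) by (intro mult_left_mono) auto
qed

lemma besselK_kernel_taylor_bounds:
  fixes x y \<nu> s :: real and k :: nat
  assumes "x > 0" "\<bar>y - x\<bar> \<le> x / 2"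
  defines "R \<equiv> besselK_kernel \<nu> k y s - besselK_kernel \<nu> k x s + (y - x) * besselK_kernel \<nu> (Suc k) x s"
  shows "0 \<le> R" "R \<le> (y - x)\<^sup>2 / 2 * besselK_kernel \<nu> (Suc (Suc k)) (x / 2) s"
proof -
  define c where "c = cosh s"
  define z where "z = - ((y - x) * c)"
  define P where "P = c ^ k * cosh (\<nu> * s) * exp (- x * c)"
  have c: "c \<ge> 1"
    unfolding c_def by (rule cosh_real_ge_1)
  have P: "P \<ge> 0"
    unfolding P_def using c by simp
  have "exp (- y * c) = exp (- x * c) * exp z"
    unfolding z_def by (simp add: exp_add[symmetric] algebra_simps)
  then have R: "R = P * (exp z - 1 - z)"
    unfolding R_def besselK_kernel_def P_def c_def[symmetric] z_def by (simp add: algebra_simps)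
  then show "0 \<le> R"
    using P exp_minus_1_minus_bounds(1)[of z] by simp
  have "- x * c + \<bar>y - x\<bar> * c \<le> - (x / 2) * c"
    using assms(2) c mult_right_mono[OF assms(2), of c] by (simp add: algebra_simps)
  then have "exp \<bar>z\<bar> * exp (- x * c) \<le> exp (- (x / 2) * c)"
    using c by (simp add: z_def abs_mult exp_add[symmetric])
  have "P * (z\<^sup>2 / 2 * exp \<bar>z\<bar>) = (y - x)\<^sup>2 / 2 * (c ^ k * c\<^sup>2 * cosh (\<nu> * s)) * (exp \<bar>z\<bar> * exp (- x * c))"
    by (simp add: P_def z_def power_mult_distrib)
  also have "\<dots> \<le> (y - x)\<^sup>2 / 2 * (c ^ k * c\<^sup>2 * cosh (\<nu> * s)) * exp (- (x / 2) * c)"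
    using \<open>exp \<bar>z\<bar> * exp (- x * c) \<le> _\<close> c by (intro mult_left_mono) auto
  also have "\<dots> = (y - x)\<^sup>2 / 2 * besselK_kernel \<nu> (Suc (Suc k)) (x / 2) s"
    by (simp add: besselK_kernel_def c_def power2_eq_square)
  finally show "R \<le> (y - x)\<^sup>2 / 2 * besselK_kernel \<nu> (Suc (Suc k)) (x / 2) s"
    unfolding R using P exp_minus_1_minus_bounds(2)[of z] by (meson mult_left_mono order_trans)
qed

lemma has_real_derivative_if_quadratic_remainder:
  fixes f :: "real \<Rightarrow> real"
  assumes "\<forall>\<^sub>F y in at x. \<bar>f y - f x - D * (y - x)\<bar> \<le> B * (y - x)\<^sup>2"
  shows "(f has_real_derivative D) (at x)"
proof -
  have "\<forall>\<^sub>F y in at x. y \<noteq> x"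
    by (simp add: eventually_at_filter)
  with assms have "\<forall>\<^sub>F y in at x. norm ((f y - f x) / (y - x) - D) \<le> B * \<bar>y - x\<bar>"
  proof eventually_elim
    case (elim y)
    then have "(f y - f x) / (y - x) - D = (f y - f x - D * (y - x)) / (y - x)"
      by (simp add: field_simps)
    define d where "d = \<bar>y - x\<bar>"
    have "d > 0" "(y - x)\<^sup>2 = d * d"
      using elim by (simp_all add: d_def power2_eq_square)
    have "norm ((f y - f x) / (y - x) - D) = \<bar>f y - f x - D * (y - x)\<bar> / d"
      unfolding \<open>(f y - f x) / (y - x) - D = _\<close> d_def by (simp add: abs_divide)
    also have "\<dots> \<le> B * (d * d) / d"
      using elim \<open>d > 0\<close> unfolding \<open>(y - x)\<^sup>2 = d * d\<close> by (intro divide_right_mono) simp_all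
    also have "\<dots> = B * d"
      using \<open>d > 0\<close> by simp
    finally show ?case
      unfolding d_def .
  qed
  moreover have "((\<lambda>y. B * \<bar>y - x\<bar>) \<longlongrightarrow> B * \<bar>x - x\<bar>) (at x)"
    by (intro tendsto_intros)
  then have "((\<lambda>y. B * \<bar>y - x\<bar>) \<longlongrightarrow> 0) (at x)"
    by simp
  ultimately have "((\<lambda>y. (f y - f x) / (y - x) - D) \<longlongrightarrow> 0) (at x)"
    by (rule Lim_null_comparison)
  then show ?thesis
    unfolding has_field_derivative_iff LIM_zero_iff .
qed

lemma besselK_moment_taylor_bounds:
  fixes x y \<nu> :: real and k :: nat
  assumes x: "x > 0" and y: "\<bar>y - x\<bar> \<le> x / 2"
  defines "R \<equiv> besselK_moment \<nu> k y - besselK_moment \<nu> k x + (y - x) * besselK_moment \<nu> (Suc k) x"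
  shows "0 \<le> R" "R \<le> (y - x)\<^sup>2 / 2 * besselK_moment \<nu> (Suc (Suc k)) (x / 2)"
proof -
  let ?r = "\<lambda>s. besselK_kernel \<nu> k y s - besselK_kernel \<nu> k x s + (y - x) * besselK_kernel \<nu> (Suc k) x s"
  have "y > 0"
    using x y by linarith
  then have int: "besselK_kernel \<nu> k y integrable_on {0..}" "besselK_kernel \<nu> k x integrable_on {0..}"
    "besselK_kernel \<nu> (Suc k) x integrable_on {0..}"
    "besselK_kernel \<nu> (Suc (Suc k)) (x / 2) integrable_on {0..}"
    using x by (simp_all add: besselK_kernel_integrable)
  then have r_int: "?r integrable_on {0..}"
    by (intro integrable_add integrable_diff integrable_on_mult_right)
  have R: "R = integral {0..} ?r"
    using int unfolding R_def besselK_moment_def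
    by (simp add: integral_add integral_diff integrable_diff integrable_on_mult_right)
  show "0 \<le> R"
    unfolding R by (rule integral_nonneg[OF r_int]) (use besselK_kernel_taylor_bounds(1)[OF x] y in auto)
  have "integral {0..} ?r
      \<le> integral {0..} (\<lambda>s. (y - x)\<^sup>2 / 2 * besselK_kernel \<nu> (Suc (Suc k)) (x / 2) s)"
    by (rule integral_le[OF r_int integrable_on_mult_right[OF int(4)]])
       (use besselK_kernel_taylor_bounds(2)[OF x] y in auto)
  then show "R \<le> (y - x)\<^sup>2 / 2 * besselK_moment \<nu> (Suc (Suc k)) (x / 2)"
    unfolding R besselK_moment_def by simp
qed

lemma has_real_derivative_besselK_moment:
  assumes x: "x > 0"
  shows "(besselK_moment \<nu> k has_real_derivative - besselK_moment \<nu> (Suc k) x) (at x)"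
proof (rule has_real_derivative_if_quadratic_remainder)
  have "\<forall>\<^sub>F y in at x. \<bar>y - x\<bar> < x / 2"
    using x unfolding eventually_at by (intro exI[of _ "x / 2"]) (auto simp: dist_real_def)
  then show "\<forall>\<^sub>F y in at x. \<bar>besselK_moment \<nu> k y - besselK_moment \<nu> k x - - besselK_moment \<nu> (Suc k) x * (y - x)\<bar>
      \<le> besselK_moment \<nu> (Suc (Suc k)) (x / 2) / 2 * (y - x)\<^sup>2"
    by eventually_elim (use besselK_moment_taylor_bounds[OF x] in \<open>auto simp: algebra_simps\<close>)
qed

lemma besselK_sinh_moment_eq:
  assumes x: "x > 0"
  shows "x * besselK_sinh_moment \<nu> x = \<nu> * besselK_moment \<nu> 0 x"
proof -
  let ?h = "\<lambda>s. x * besselK_sinh_kernel \<nu> x s - \<nu> * besselK_kernel \<nu> 0 x s"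
  have "integral {0..} ?h = 0"
  proof (rule integral_atLeast_0_derivative_eq_0)
    show "((\<lambda>s. - sinh (\<nu> * s) * exp (- x * cosh s)) has_real_derivative ?h s) (at s)" for s
      unfolding besselK_sinh_kernel_def besselK_kernel_def
      by (auto intro!: derivative_eq_intros simp: algebra_simps)
    show "continuous_on {0..} ?h"
      by (intro continuous_intros continuous_on_besselK_kernel continuous_on_besselK_sinh_kernel)
    show "exp_decaying ?h"
      using x by (intro exp_decaying_diff exp_decaying_cmult besselK_sinh_kernel_exp_decaying
          besselK_kernel_exp_decaying)
    show "exp_decaying (\<lambda>s. - sinh (\<nu> * s) * exp (- x * cosh s))"
    proof (rule exp_decaying_mono[OF cosh_power_kernel_exp_decaying[OF x, of 0 \<nu>]])
      show "\<bar>- sinh (\<nu> * s) * exp (- x * cosh s)\<bar> \<le> \<bar>cosh s ^ 0 * exp (\<bar>\<nu>\<bar> * s) * exp (- x * cosh s)\<bar>"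
        if "s \<ge> 0" for s
        using abs_sinh_le_exp_abs[of "\<nu> * s"] that by (simp add: abs_mult mult_right_mono)
    qed
  qed simp
  then show ?thesis
    using besselK_sinh_kernel_integrable[OF x] besselK_kernel_integrable[OF x]
    by (simp add: besselK_sinh_moment_def besselK_moment_def integral_diff integrable_on_mult_right)
qed

lemma besselK_moment_2_eq:
  assumes x: "x > 0"
  shows "x * besselK_moment \<nu> 2 x
    = x * besselK_moment \<nu> 0 x + besselK_moment \<nu> 1 x + \<nu> * besselK_sinh_moment \<nu> x"
proof -
  let ?K = "\<lambda>k. besselK_kernel \<nu> k x"
  let ?h = "\<lambda>s. ?K 1 s + \<nu> * besselK_sinh_kernel \<nu> x s - x * ?K 2 s + x * ?K 0 s"
  let ?G = "\<lambda>s. sinh s * cosh (\<nu> * s) * exp (- x * cosh s)"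
  have "integral {0..} ?h = 0"
  proof (rule integral_atLeast_0_derivative_eq_0)
    show "(?G has_real_derivative ?h s) (at s)" for s
    proof -
      have "(?G has_real_derivative cosh s * cosh (\<nu> * s) * exp (- x * cosh s)
          + \<nu> * (sinh s * sinh (\<nu> * s) * exp (- x * cosh s))
          - x * sinh s ^ 2 * cosh (\<nu> * s) * exp (- x * cosh s)) (at s)"
        by (auto intro!: derivative_eq_intros simp: algebra_simps power2_eq_square)
      moreover have "sinh s ^ 2 = cosh s ^ 2 - 1"
        using cosh_square_eq[of s] by simp
      ultimately show ?thesis
        unfolding besselK_sinh_kernel_def besselK_kernel_def by (simp add: algebra_simps)
    qed
    show "continuous_on {0..} ?h"
      by (intro continuous_intros continuous_on_besselK_kernel continuous_on_besselK_sinh_kernel)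
    show "exp_decaying ?h"
      using x by (intro exp_decaying_add exp_decaying_diff exp_decaying_cmult besselK_sinh_kernel_exp_decaying
          besselK_kernel_exp_decaying)
    show "exp_decaying ?G"
    proof (rule exp_decaying_mono[OF cosh_power_kernel_exp_decaying[OF x, of 1 \<nu>]])
      show "\<bar>?G s\<bar> \<le> \<bar>cosh s ^ 1 * exp (\<bar>\<nu>\<bar> * s) * exp (- x * cosh s)\<bar>" if "s \<ge> 0" for s
        using abs_sinh_le_cosh[of s] abs_cosh_le_exp_abs[of "\<nu> * s"] that
        by (simp add: abs_mult mult_mono mult_right_mono)
    qed
  qed simp
  then show ?thesis
    using besselK_sinh_kernel_integrable[OF x] besselK_kernel_integrable[OF x]
    by (simp add: besselK_sinh_moment_def besselK_moment_def integral_diff integral_add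
        integrable_on_mult_right integrable_add integrable_diff algebra_simps)
qed

lemma cosh_cauchy_schwarz:
  fixes A S \<nu> s :: real
  assumes "s \<noteq> 0" "A ^ 2 + S ^ 2 > 0"
  shows "A * cosh (\<nu> * s) + S * (sinh s * sinh (\<nu> * s)) < sqrt (A ^ 2 + S ^ 2) * cosh s * cosh (\<nu> * s)"
proof -
  define w where "w = cosh (\<nu> * s)"
  define q where "q = sinh s * sinh (\<nu> * s)"
  have "sinh (\<nu> * s) ^ 2 < w ^ 2"
    using cosh_square_eq[of "\<nu> * s"] unfolding w_def by simp
  then have "sinh s ^ 2 * sinh (\<nu> * s) ^ 2 < sinh s ^ 2 * w ^ 2"
    using assms(1) by (intro mult_strict_left_mono) auto
  then have "w ^ 2 + q ^ 2 < (cosh s * w) ^ 2"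
    using cosh_square_eq[of s] unfolding q_def by (simp add: power_mult_distrib algebra_simps)
  have "(A * w + S * q) ^ 2 \<le> (A ^ 2 + S ^ 2) * (w ^ 2 + q ^ 2)"
    using zero_le_power2[of "A * q - S * w"] by (simp add: power2_eq_square algebra_simps)
  also have "\<dots> < (A ^ 2 + S ^ 2) * (cosh s * w) ^ 2"
    using \<open>w ^ 2 + q ^ 2 < _\<close> assms(2) by (intro mult_strict_left_mono)
  also have "\<dots> = (sqrt (A ^ 2 + S ^ 2) * cosh s * w) ^ 2"
    using assms(2) by (simp add: power_mult_distrib)
  finally have "A * w + S * q < sqrt (A ^ 2 + S ^ 2) * cosh s * w"
    by (rule power2_less_imp_less) (simp add: w_def cosh_real_pos less_imp_le)
  then show ?thesis
    unfolding w_def q_def .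
qed

lemma besselK_moment_1_sq_gt:
  assumes x: "x > 0"
  shows "besselK_moment \<nu> 1 x ^ 2 > besselK_moment \<nu> 0 x ^ 2 + besselK_sinh_moment \<nu> x ^ 2"
proof -
  define A where "A = besselK_moment \<nu> 0 x"
  define S where "S = besselK_sinh_moment \<nu> x"
  define R where "R = sqrt (A ^ 2 + S ^ 2)"
  have pos: "A ^ 2 + S ^ 2 > 0"
    using besselK_moment_pos[OF x, of \<nu> 0] unfolding A_def by (simp add: add_pos_nonneg)
  let ?f = "\<lambda>s. R * besselK_kernel \<nu> 1 x s - A * besselK_kernel \<nu> 0 x s - S * besselK_sinh_kernel \<nu> x s"
  have "0 < integral {0..} ?f"
  proof (rule integral_atLeast_0_pos)
    show "continuous_on {0..} ?f"
      by (intro continuous_intros continuous_on_besselK_kernel continuous_on_besselK_sinh_kernel)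
    show "?f integrable_on {0..}"
      using besselK_kernel_integrable[OF x] besselK_sinh_kernel_integrable[OF x]
      by (intro integrable_diff integrable_on_mult_right)
    have "?f s = exp (- x * cosh s)
        * (R * cosh s * cosh (\<nu> * s) - (A * cosh (\<nu> * s) + S * (sinh s * sinh (\<nu> * s))))" for s
      unfolding besselK_kernel_def besselK_sinh_kernel_def by (simp add: algebra_simps)
    moreover have "A * cosh (\<nu> * s) + S * (sinh s * sinh (\<nu> * s)) < R * cosh s * cosh (\<nu> * s)"
      if "s \<noteq> 0" for s
      unfolding R_def using cosh_cauchy_schwarz[OF that pos] .
    ultimately show "?f s > 0" if "s > 0" for s
      using that by simp
    show "?f s \<ge> 0" if "s \<ge> 0" for s
      using \<open>\<And>s. s > 0 \<Longrightarrow> ?f s > 0\<close>[of s] that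
      by (cases "s = 0") (auto simp: besselK_kernel_def besselK_sinh_kernel_def R_def real_sqrt_ge_abs1)
  qed
  also have "integral {0..} ?f = R * besselK_moment \<nu> 1 x - A ^ 2 - S ^ 2"
    using besselK_kernel_integrable[OF x] besselK_sinh_kernel_integrable[OF x]
    by (simp add: A_def S_def besselK_moment_def besselK_sinh_moment_def integral_diff
        integrable_on_mult_right integrable_diff power2_eq_square)
  moreover have R: "R > 0" "R ^ 2 = A ^ 2 + S ^ 2"
    using pos unfolding R_def by simp_all
  ultimately have "R * R < R * besselK_moment \<nu> 1 x"
    by (simp add: power2_eq_square)
  then have "R < besselK_moment \<nu> 1 x"
    using R(1) by simp
  then have "R ^ 2 < besselK_moment \<nu> 1 x ^ 2"
    using R(1) by (intro power_strict_mono) auto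
  then show ?thesis
    unfolding R(2) A_def S_def .
qed

section \<open>Elasticity\<close>

definition elasticity :: "(real \<Rightarrow> real) \<Rightarrow> real \<Rightarrow> real" where
  "elasticity f x = x * deriv f x / f x"

lemma DERIV_neg_imp_strict_antimono_on:
  fixes f :: "real \<Rightarrow> real"
  assumes "\<And>x. x > a \<Longrightarrow> \<exists>D. (f has_real_derivative D) (at x) \<and> D < 0"
  shows "strict_antimono_on {a<..} f"
proof (unfold monotone_on_def, intro ballI impI)
  fix x y
  assume "x \<in> {a<..}" "y \<in> {a<..}" "x < y"
  show "f y < f x"
  proof (rule DERIV_neg_imp_decreasing[OF \<open>x < y\<close>])
    fix z
    assume "x \<le> z" "z \<le> y"
    with \<open>x \<in> {a<..}\<close> have "z > a"
      by simp
    then show "\<exists>D. (f has_real_derivative D) (at z) \<and> D < 0"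
      by (rule assms)
  qed
qed

lemma has_real_derivative_besselK:
  "x > 0 \<Longrightarrow> (besselK \<nu> has_real_derivative - besselK_moment \<nu> 1 x) (at x)"
  using has_real_derivative_besselK_moment[of x \<nu> 0] by (simp add: besselK_eq_moment_0)

lemma besselK_pos: "x > 0 \<Longrightarrow> besselK \<nu> x > 0"
  by (simp add: besselK_eq_moment_0 besselK_moment_pos)

lemma elasticity_besselK:
  "x > 0 \<Longrightarrow> elasticity (besselK \<nu>) x = - x * besselK_moment \<nu> 1 x / besselK_moment \<nu> 0 x"
  using DERIV_imp_deriv[OF has_real_derivative_besselK] by (simp add: elasticity_def besselK_eq_moment_0)

lemma has_real_derivative_elasticity_besselK_neg:
  assumes x: "x > 0"
  shows "\<exists>D. (elasticity (besselK \<nu>) has_real_derivative D) (at x) \<and> D < 0"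
proof -
  define M0 M1 M2 S where "M0 = besselK_moment \<nu> 0 x" and "M1 = besselK_moment \<nu> 1 x"
    and "M2 = besselK_moment \<nu> 2 x" and "S = besselK_sinh_moment \<nu> x"
  have M0: "M0 > 0"
    unfolding M0_def by (rule besselK_moment_pos[OF x])
  have "((\<lambda>y. - y * besselK_moment \<nu> 1 y / besselK_moment \<nu> 0 y) has_real_derivative
      (((- x) * (- M2) + (- 1) * M1) * M0 - (- x * M1) * (- M1)) / M0 ^ 2) (at x)"
    using DERIV_divide[OF DERIV_mult'[OF DERIV_minus[OF DERIV_ident] has_real_derivative_besselK_moment[OF x, of \<nu> 1]]
        has_real_derivative_besselK_moment[OF x, of \<nu> 0]] M0
    unfolding M0_def M1_def M2_def numeral_2_eq_2 by (simp add: power2_eq_square)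
  then have "(elasticity (besselK \<nu>) has_real_derivative
      (((- x) * (- M2) + (- 1) * M1) * M0 - (- x * M1) * (- M1)) / M0 ^ 2) (at x)"
  proof (rule has_field_derivative_transform_within_open)
    show "- y * besselK_moment \<nu> 1 y / besselK_moment \<nu> 0 y = elasticity (besselK \<nu>) y"
      if "y \<in> {0<..}" for y
      using elasticity_besselK[of y \<nu>] that by simp
  qed (use x in auto)
  moreover have "((- x) * (- M2) + (- 1) * M1) * M0 - (- x * M1) * (- M1) = x * (M0 ^ 2 + S ^ 2 - M1 ^ 2)"
    using besselK_sinh_moment_eq[OF x, of \<nu>] besselK_moment_2_eq[OF x, of \<nu>]
    unfolding M0_def M1_def M2_def S_def by (simp add: algebra_simps power2_eq_square)
  moreover have "x * (M0 ^ 2 + S ^ 2 - M1 ^ 2) / M0 ^ 2 < 0"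
    using besselK_moment_1_sq_gt[OF x, of \<nu>] x M0 unfolding M0_def M1_def S_def
    by (intro divide_neg_pos mult_pos_neg) auto
  ultimately show ?thesis
    by auto
qed

lemma strict_antimono_on_elasticity_besselK: "strict_antimono_on {0<..} (elasticity (besselK \<nu>))"
  by (intro DERIV_neg_imp_strict_antimono_on has_real_derivative_elasticity_besselK_neg)

lemma elasticity_comp_scale_square:
  assumes "(f has_real_derivative D) (at (c * x ^ 2))"
  shows "elasticity (\<lambda>x. f (c * x ^ 2)) x = 2 * elasticity f (c * x ^ 2)"
proof -
  have "((\<lambda>x. c * x ^ 2) has_real_derivative c * (2 * x)) (at x)"
    by (auto intro!: derivative_eq_intros)
  from DERIV_chain2[OF assms this] show ?thesis
    using DERIV_imp_deriv[OF assms] by (simp add: elasticity_def DERIV_imp_deriv power2_eq_square)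
qed

lemma strict_antimono_on_elasticity_comp_scale_square:
  assumes "c > 0" "\<And>x. x > 0 \<Longrightarrow> f differentiable at x"
    and "strict_antimono_on {0<..} (elasticity f)"
  shows "strict_antimono_on {0<..} (elasticity (\<lambda>x. f (c * x ^ 2)))"
proof (unfold monotone_on_def, intro ballI impI)
  fix x y :: real
  assume "x \<in> {0<..}" "y \<in> {0<..}" "x < y"
  then have pos: "c * x ^ 2 > 0" "c * y ^ 2 > 0" and "c * x ^ 2 < c * y ^ 2"
    using assms(1) by (auto intro: power_strict_mono)
  then have "elasticity f (c * y ^ 2) < elasticity f (c * x ^ 2)"
    using assms(3) unfolding monotone_on_def by auto
  moreover have "elasticity (\<lambda>x. f (c * x ^ 2)) z = 2 * elasticity f (c * z ^ 2)" if "c * z ^ 2 > 0" for z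
    using assms(2)[OF that] unfolding DERIV_deriv_iff_real_differentiable[symmetric]
    by (rule elasticity_comp_scale_square)
  ultimately show "elasticity (\<lambda>x. f (c * x ^ 2)) y < elasticity (\<lambda>x. f (c * x ^ 2)) x"
    using pos by simp
qed

lemma strict_antimono_on_log_derivative:
  assumes "strict_antimono_on {0<..} (elasticity F)" "\<And>x. x > 0 \<Longrightarrow> elasticity F x > 0"
  shows "strict_antimono_on {0<..} (\<lambda>x. deriv F x / F x)"
proof (unfold monotone_on_def, intro ballI impI)
  fix x y :: real
  assume xy: "x \<in> {0<..}" "y \<in> {0<..}" "x < y"
  then have "elasticity F y / y < elasticity F x / y"
    using assms(1) unfolding monotone_on_def by (simp add: divide_strict_right_mono)
  also have "\<dots> < elasticity F x / x"
    using assms(2) xy by (simp add: divide_strict_left_mono)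
  finally show "deriv F y / F y < deriv F x / F x"
    using xy by (simp add: elasticity_def)
qed

lemma antiderivative_pos:
  fixes F f :: "real \<Rightarrow> real"
  assumes "\<And>t. t > 0 \<Longrightarrow> (F has_real_derivative f t) (at t)" "\<And>t. t > 0 \<Longrightarrow> f t > 0"
    and "continuous_on {0..u} F" "F 0 = 0" "u > 0"
  shows "F u > 0"
proof -
  have "F 0 < F u"
  proof (rule DERIV_pos_imp_increasing_open[OF \<open>u > 0\<close> _ assms(3)])
    show "\<exists>D. (F has_real_derivative D) (at t) \<and> 0 < D" if "0 < t" for t
      using assms(1,2)[OF that] by blast
  qed
  then show ?thesis
    using assms(4) by simp
qed

lemma continuous_on_Icc_0_if_tendsto_at_right:
  fixes g :: "real \<Rightarrow> real"
  assumes "(g \<longlongrightarrow> g 0) (at_right 0)" "\<And>t. t > 0 \<Longrightarrow> isCont g t" "u > 0"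
  shows "continuous_on {0..u} g"
  unfolding continuous_on_eq_continuous_within
proof
  fix t
  assume t: "t \<in> {0..u}"
  show "continuous (at t within {0..u}) g"
  proof (cases "t = 0")
    case True
    have "at 0 within {0..u} = at_right (0::real)"
      using assms(3) by (rule at_within_Icc_at_right)
    then show ?thesis
      using assms(1) unfolding True continuous_within by simp
  next
    case False
    then have "isCont g t"
      using t by (intro assms(2)) simp
    then show ?thesis
      by (rule continuous_at_imp_continuous_at_within)
  qed
qed

lemma antiderivative_elasticity_bound:
  fixes f F :: "real \<Rightarrow> real"
  assumes f: "\<And>t. t > 0 \<Longrightarrow> f differentiable at t" "\<And>t. t > 0 \<Longrightarrow> f t > 0"
    and F: "\<And>t. t > 0 \<Longrightarrow> (F has_real_derivative f t) (at t)" "continuous_on {0..u} F" "F 0 = 0"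
    and lim: "((\<lambda>t. t * f t) \<longlongrightarrow> 0) (at_right 0)"
    and dec: "strict_antimono_on {0<..} (elasticity f)"
    and u: "u > 0"
  shows "(1 + elasticity f u) * F u < u * f u"
proof -
  let ?e = "elasticity f"
  define H where "H t = t * f t - (1 + ?e u) * F t" for t
  have "continuous_on {0..u} (\<lambda>t. t * f t)"
  proof (rule continuous_on_Icc_0_if_tendsto_at_right[OF _ _ u])
    show "((\<lambda>t. t * f t) \<longlongrightarrow> 0 * f 0) (at_right 0)"
      using lim by simp
    show "isCont (\<lambda>t. t * f t) t" if "t > 0" for t
      using differentiable_imp_continuous_within[OF f(1)[OF that]] by (intro continuous_intros)
  qed
  from continuous_on_diff[OF this continuous_on_mult[OF continuous_on_const F(2)]]
  have "continuous_on {0..u} H"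
    unfolding H_def .
  moreover have "\<exists>D. (H has_real_derivative D) (at t) \<and> 0 < D" if t: "0 < t" "t < u" for t
  proof -
    have "(f has_real_derivative deriv f t) (at t)"
      using f(1)[of t] t by (simp add: DERIV_deriv_iff_real_differentiable)
    then have "(H has_real_derivative (t * deriv f t + f t) - (1 + ?e u) * f t) (at t)"
      unfolding H_def using F(1) t by (auto intro!: derivative_eq_intros)
    moreover have "t * deriv f t = ?e t * f t"
      using f(2)[of t] t by (simp add: elasticity_def)
    then have "(t * deriv f t + f t) - (1 + ?e u) * f t = f t * (?e t - ?e u)"
      by (simp add: algebra_simps)
    moreover have "f t * (?e t - ?e u) > 0"
      using dec t f(2)[of t] unfolding monotone_on_def by simp
    ultimately show ?thesis
      by auto
  qed
  ultimately have "H 0 < H u"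
    by (intro DERIV_pos_imp_increasing_open[OF u])
  then show ?thesis
    by (simp add: H_def F(3))
qed

lemma strict_antimono_on_elasticity_integral:
  fixes f F :: "real \<Rightarrow> real"
  assumes f: "\<And>t. t > 0 \<Longrightarrow> f differentiable at t" "\<And>t. t > 0 \<Longrightarrow> f t > 0"
    and F: "\<And>t. t > 0 \<Longrightarrow> (F has_real_derivative f t) (at t)"
      "\<And>t. t > 0 \<Longrightarrow> continuous_on {0..t} F" "F 0 = 0"
    and lim: "((\<lambda>t. t * f t) \<longlongrightarrow> 0) (at_right 0)"
    and dec: "strict_antimono_on {0<..} (elasticity f)"
  shows "strict_antimono_on {0<..} (elasticity F)"
proof (rule DERIV_neg_imp_strict_antimono_on)
  fix u :: real
  assume u: "u > 0"
  have F_pos: "F u > 0"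
    using antiderivative_pos[OF F(1) f(2) F(2)[OF u] F(3) u] .
  have f': "(f has_real_derivative deriv f u) (at u)"
    using f(1)[OF u] by (simp add: DERIV_deriv_iff_real_differentiable)
  have "((\<lambda>t. t * f t / F t) has_real_derivative
      ((deriv f u * u + f u) * F u - u * f u * f u) / (F u * F u)) (at u)"
    using f' F(1)[OF u] F_pos by (auto intro!: derivative_eq_intros)
  then have "(elasticity F has_real_derivative
      ((deriv f u * u + f u) * F u - u * f u * f u) / (F u * F u)) (at u)"
  proof (rule has_field_derivative_transform_within_open)
    show "t * f t / F t = elasticity F t" if "t \<in> {0<..}" for t
      using DERIV_imp_deriv[OF F(1)] that by (simp add: elasticity_def)
  qed (use u in auto)
  moreover have "u * deriv f u = elasticity f u * f u"
    using f(2)[OF u] by (simp add: elasticity_def)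
  then have "(deriv f u * u + f u) * F u - u * f u * f u
      = - f u * (u * f u - (1 + elasticity f u) * F u)"
    by (simp add: algebra_simps)
  moreover have "- f u * (u * f u - (1 + elasticity f u) * F u) / (F u * F u) < 0"
    using antiderivative_elasticity_bound[OF f F(1) F(2)[OF u] F(3) lim dec u] f(2)[OF u] F_pos
    by (intro divide_neg_pos) (auto intro: mult_pos_pos)
  ultimately show "\<exists>D. (elasticity F has_real_derivative D) (at u) \<and> D < 0"
    by auto
qed

section \<open>The gamma-gamma distribution\<close>

lemma elasticity_powr_mult_besselK_sqrt:
  fixes A c q \<nu> u :: real
  assumes A: "A \<noteq> 0" and c: "c > 0" and u: "u > 0"
  defines "g \<equiv> \<lambda>v. A * v powr q * besselK \<nu> (2 * sqrt (c * v))"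
  shows "g differentiable at u"
    and "elasticity g u = q + elasticity (besselK \<nu>) (2 * sqrt (c * u)) / 2"
proof -
  define y where "y = 2 * sqrt (c * u)"
  define D where "D = deriv (besselK \<nu>) y"
  have y: "y > 0"
    unfolding y_def using c u by simp
  have dK: "(besselK \<nu> has_real_derivative D) (at y)"
    using has_real_derivative_besselK[of y \<nu>, OF y] unfolding D_def by (simp add: DERIV_imp_deriv)
  have "((\<lambda>v. 2 * sqrt (c * v)) has_real_derivative 2 * (inverse (sqrt (c * u)) / 2 * c)) (at u)"
    using c u by (intro DERIV_cmult DERIV_chain2[OF DERIV_real_sqrt] DERIV_cmult_Id) auto
  then have "((\<lambda>v. 2 * sqrt (c * v)) has_real_derivative c / sqrt (c * u)) (at u)"
    by (simp add: inverse_eq_divide)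
  from DERIV_mult'[OF DERIV_cmult[OF has_real_derivative_powr[OF u]] DERIV_chain2[OF dK[unfolded y_def] this]]
  have "(g has_real_derivative
      A * u powr q * (D * (c / sqrt (c * u))) + A * (q * u powr (q - 1)) * besselK \<nu> y) (at u)"
    unfolding g_def y_def .
  then have "deriv g u = A * u powr q * (D * (c / sqrt (c * u))) + A * (q * u powr (q - 1)) * besselK \<nu> y"
    and "g differentiable at u"
    by (auto simp: DERIV_imp_deriv real_differentiable_def)
  then show "g differentiable at u"
    by simp
  have "u * deriv g u = A * u powr q * D * (u * (c / sqrt (c * u))) + A * q * (u * u powr (q - 1)) * besselK \<nu> y"
    unfolding \<open>deriv g u = _\<close> by (simp only: distrib_left mult.assoc mult.left_commute)
  moreover have "u * u powr (q - 1) = u powr q"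
    using u by (simp add: powr_diff)
  moreover have "u * (c / sqrt (c * u)) = y / 2"
  proof -
    have "u * (c / sqrt (c * u)) = (c * u) / sqrt (c * u)"
      by simp
    also have "\<dots> = sqrt (c * u)"
      using c u by (intro real_div_sqrt) simp
    finally show ?thesis
      unfolding y_def by simp
  qed
  ultimately have "u * deriv g u = A * u powr q * D * (y / 2) + A * q * u powr q * besselK \<nu> y"
    by (simp only:)
  moreover have "besselK \<nu> y > 0" "u powr q > 0"
    using besselK_pos[OF y] u by simp_all
  moreover have "g u = A * u powr q * besselK \<nu> y"
    unfolding g_def y_def ..
  ultimately show "elasticity g u = q + elasticity (besselK \<nu>) (2 * sqrt (c * u)) / 2"
    using A unfolding elasticity_def y_def[symmetric] D_def[symmetric] by (simp add: field_simps)
qed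

lemma besselK_le:
  assumes y: "y > 0" and m: "m > \<bar>\<nu>\<bar>"
  shows "besselK \<nu> y \<le> m powr m * (y / 2) powr (- m) / (m - \<bar>\<nu>\<bar>)"
proof -
  define B where "B = m powr m * (y / 2) powr (- m)"
  define l where "l = m - \<bar>\<nu>\<bar>"
  have l: "l > 0" and "m > 0"
    using m unfolding l_def by linarith+
  have exp_int: "((\<lambda>s. B * exp (- l * s)) has_integral B * (exp (- l * 0) / l)) {0..}"
    by (rule has_integral_mult_right[OF has_integral_exp_minus_to_infinity[OF l]])
  have "besselK \<nu> y \<le> integral {0..} (\<lambda>s. B * exp (- l * s))"
    unfolding besselK_eq_moment_0 besselK_moment_def
  proof (rule integral_le[OF besselK_kernel_integrable[OF y] has_integral_integrable[OF exp_int]])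
    fix s :: real
    assume "s \<in> {0..}"
    then have s: "s \<ge> 0"
      by simp
    have "besselK_kernel \<nu> 0 y s \<le> exp (\<bar>\<nu>\<bar> * s) * exp (- y * cosh s)"
      using abs_cosh_le_exp_abs[of "\<nu> * s"] s
      by (simp add: besselK_kernel_def abs_mult mult.commute mult_left_mono)
    also have "\<dots> \<le> exp (\<bar>\<nu>\<bar> * s) * (B * exp (- m * s))"
      using exp_neg_mult_cosh_le[OF y \<open>m > 0\<close> s] unfolding B_def by simp
    also have "\<dots> = B * exp (- l * s)"
      unfolding l_def by (simp add: exp_add[symmetric] algebra_simps)
    finally show "besselK_kernel \<nu> 0 y s \<le> B * exp (- l * s)" .
  qed
  also have "\<dots> = B / l"
    using integral_unique[OF exp_int] by simp
  finally show ?thesis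
    unfolding B_def l_def .
qed

definition gg_pdf_const :: "real \<Rightarrow> real \<Rightarrow> real \<Rightarrow> real" where
  "gg_pdf_const a b \<alpha> = 2 * (a * b) powr ((a + b) / 2) / (Gamma a * Gamma b * \<alpha> powr ((a + b) / 2))"

lemma gg_pdf_eq:
  "gg_pdf a b \<alpha> =
     (\<lambda>u. gg_pdf_const a b \<alpha> * u powr ((a + b) / 2 - 1) * besselK (a - b) (2 * sqrt (a * b / \<alpha> * u)))"
  by (simp add: fun_eq_iff gg_pdf_def gg_pdf_const_def)

context
  fixes a b \<alpha> :: real
  assumes a: "a > 0" and b: "b > 0" and \<alpha>: "\<alpha> > 0"
begin

lemma gg_pdf_const_pos: "gg_pdf_const a b \<alpha> > 0"
  unfolding gg_pdf_const_def using a b \<alpha> by (simp add: Gamma_real_pos)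

lemma gg_pdf_pos: "u > 0 \<Longrightarrow> gg_pdf a b \<alpha> u > 0"
  unfolding gg_pdf_eq using gg_pdf_const_pos a b \<alpha> by (simp add: besselK_pos)

lemma
  assumes "u > 0"
  shows differentiable_gg_pdf: "gg_pdf a b \<alpha> differentiable at u"
    and elasticity_gg_pdf: "elasticity (gg_pdf a b \<alpha>) u
      = (a + b) / 2 - 1 + elasticity (besselK (a - b)) (2 * sqrt (a * b / \<alpha> * u)) / 2"
  using elasticity_powr_mult_besselK_sqrt[of "gg_pdf_const a b \<alpha>" "a * b / \<alpha>" u] gg_pdf_const_pos a b \<alpha> assms
  unfolding gg_pdf_eq by simp_all

lemma strict_antimono_on_elasticity_gg_pdf: "strict_antimono_on {0<..} (elasticity (gg_pdf a b \<alpha>))"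
proof (unfold monotone_on_def, intro ballI impI)
  fix u v :: real
  assume uv: "u \<in> {0<..}" "v \<in> {0<..}" "u < v"
  have "a * b / \<alpha> * u < a * b / \<alpha> * v"
    using a b \<alpha> uv by (intro mult_strict_left_mono) auto
  then have "2 * sqrt (a * b / \<alpha> * u) < 2 * sqrt (a * b / \<alpha> * v)" "2 * sqrt (a * b / \<alpha> * u) > 0"
    using a b \<alpha> uv by simp_all
  then have "elasticity (besselK (a - b)) (2 * sqrt (a * b / \<alpha> * v))
      < elasticity (besselK (a - b)) (2 * sqrt (a * b / \<alpha> * u))"
    using strict_antimono_on_elasticity_besselK unfolding monotone_on_def by simp
  then show "elasticity (gg_pdf a b \<alpha>) v < elasticity (gg_pdf a b \<alpha>) u"
    using uv by (simp add: elasticity_gg_pdf)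
qed

lemma isCont_gg_pdf: "u > 0 \<Longrightarrow> isCont (gg_pdf a b \<alpha>) u"
  by (rule differentiable_imp_continuous_within[OF differentiable_gg_pdf])

lemma gg_pdf_le_powr:
  obtains C where "\<And>u. u > 0 \<Longrightarrow> gg_pdf a b \<alpha> u \<le> C * u powr (min a b / 2 - 1)"
proof -
  define m where "m = max a b"
  define c where "c = a * b / \<alpha>"
  define A where "A = gg_pdf_const a b \<alpha>"
  have m: "m > \<bar>a - b\<bar>" and c: "c > 0" and A: "A > 0"
    using a b \<alpha> gg_pdf_const_pos unfolding m_def c_def A_def by auto
  define C where "C = A * (m powr m * c powr (- m / 2) / (m - \<bar>a - b\<bar>))"
  have "gg_pdf a b \<alpha> u \<le> C * u powr (min a b / 2 - 1)" if u: "u > 0" for u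
  proof -
    have y: "2 * sqrt (c * u) > 0"
      using c u by simp
    have "2 * sqrt (c * u) / 2 = (c * u) powr (1 / 2)"
      using c u by (simp add: powr_half_sqrt)
    then have "(2 * sqrt (c * u) / 2) powr (- m) = c powr (- m / 2) * u powr (- m / 2)"
      using c u by (simp add: powr_powr powr_mult)
    then have K: "besselK (a - b) (2 * sqrt (c * u))
        \<le> m powr m * (c powr (- m / 2) * u powr (- m / 2)) / (m - \<bar>a - b\<bar>)"
      using besselK_le[OF y m] by simp
    have "gg_pdf a b \<alpha> u = A * u powr ((a + b) / 2 - 1) * besselK (a - b) (2 * sqrt (c * u))"
      unfolding gg_pdf_eq A_def c_def ..
    also have "\<dots> \<le> A * u powr ((a + b) / 2 - 1) * (m powr m * (c powr (- m / 2) * u powr (- m / 2)) / (m - \<bar>a - b\<bar>))"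
      using K A u by (intro mult_left_mono) auto
    also have "\<dots> = C * (u powr ((a + b) / 2 - 1) * u powr (- m / 2))"
      unfolding C_def by (simp add: algebra_simps)
    also have "u powr ((a + b) / 2 - 1) * u powr (- m / 2) = u powr ((a + b) / 2 - 1 + - m / 2)"
      by (rule powr_add[symmetric])
    also have "(a + b) / 2 - 1 + - m / 2 = min a b / 2 - 1"
      unfolding m_def by (auto simp: max_def min_def field_simps)
    finally show ?thesis .
  qed
  then show ?thesis
    using that by blast
qed

lemma gg_pdf_integrable: "t \<ge> 0 \<Longrightarrow> gg_pdf a b \<alpha> integrable_on {0..t}"
proof -
  assume t: "t \<ge> 0"
  obtain C where C: "\<And>u. u > 0 \<Longrightarrow> gg_pdf a b \<alpha> u \<le> C * u powr (min a b / 2 - 1)"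
    using gg_pdf_le_powr by blast
  have "continuous_on {0<..t} (gg_pdf a b \<alpha>)"
    using isCont_gg_pdf by (intro continuous_at_imp_continuous_on) auto
  then have "gg_pdf a b \<alpha> \<in> borel_measurable (lebesgue_on {0<..t})"
    by (intro continuous_imp_measurable_on_sets_lebesgue) auto
  moreover have "(\<lambda>u. C * u powr (min a b / 2 - 1)) integrable_on {0<..t}"
    using integrable_on_powr_from_0'[of "min a b / 2 - 1" t] a b t by (intro integrable_on_mult_right) auto
  ultimately have "gg_pdf a b \<alpha> integrable_on {0<..t}"
  proof (rule measurable_bounded_by_integrable_imp_integrable)
    show "norm (gg_pdf a b \<alpha> u) \<le> C * u powr (min a b / 2 - 1)" if "u \<in> {0<..t}" for u
      using C[of u] gg_pdf_pos[of u] that by (simp add: abs_of_pos)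
  qed auto
  moreover have "{0..t} = insert 0 {0<..t}"
    using t by auto
  ultimately show ?thesis
    by (simp add: integrable_on_insert_iff)
qed

lemma has_real_derivative_gg_cdf:
  assumes u: "u > 0"
  shows "(gg_cdf a b \<alpha> has_real_derivative gg_pdf a b \<alpha> u) (at u)"
proof -
  have "((\<lambda>t. integral {0..t} (gg_pdf a b \<alpha>)) has_vector_derivative gg_pdf a b \<alpha> u) (at u within {0..u + 1} - {})"
  proof (rule integral_has_vector_derivative_continuous_at)
    show "continuous (at u within {0..u + 1} - {}) (gg_pdf a b \<alpha>)"
      using isCont_gg_pdf[OF u] by (rule continuous_at_imp_continuous_at_within)
  qed (use u gg_pdf_integrable in auto)
  moreover have "at u within {0..u + 1} - {} = at u"
    using u by (intro at_within_interior) auto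
  ultimately show ?thesis
    by (simp add: gg_cdf_def[abs_def] has_real_derivative_iff_has_vector_derivative)
qed

lemma continuous_on_gg_cdf: "t \<ge> 0 \<Longrightarrow> continuous_on {0..t} (gg_cdf a b \<alpha>)"
  unfolding gg_cdf_def[abs_def] by (rule indefinite_integral_continuous_1[OF gg_pdf_integrable])

lemma tendsto_mult_gg_pdf_at_right_0: "((\<lambda>t. t * gg_pdf a b \<alpha> t) \<longlongrightarrow> 0) (at_right 0)"
proof -
  obtain C where C: "\<And>u. u > 0 \<Longrightarrow> gg_pdf a b \<alpha> u \<le> C * u powr (min a b / 2 - 1)"
    using gg_pdf_le_powr by blast
  have "\<forall>\<^sub>F t in at_right 0. norm (t * gg_pdf a b \<alpha> t) \<le> C * t powr (min a b / 2)"
    using eventually_at_right_less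
  proof eventually_elim
    case (elim t)
    then have "norm (t * gg_pdf a b \<alpha> t) \<le> t * (C * t powr (min a b / 2 - 1))"
      using C[of t] gg_pdf_pos[of t] by (simp add: mult_left_mono)
    also have "\<dots> = C * t powr (min a b / 2)"
      using elim by (simp add: powr_diff)
    finally show ?case .
  qed
  moreover have "((\<lambda>t. t powr (min a b / 2)) \<longlongrightarrow> 0) (at_right (0::real))"
  proof (rule tendsto_zero_powrI[OF tendsto_ident_at tendsto_const])
    show "\<forall>\<^sub>F t in at_right 0. 0 \<le> (t::real)"
      by (simp add: eventually_at_filter)
  qed (use a b in simp)
  then have "((\<lambda>t. C * t powr (min a b / 2)) \<longlongrightarrow> 0) (at_right (0::real))"
    by (rule tendsto_mult_right_zero)
  ultimately show ?thesis
    by (rule Lim_null_comparison)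
qed

lemma strict_antimono_on_elasticity_gg_cdf: "strict_antimono_on {0<..} (elasticity (gg_cdf a b \<alpha>))"
  by (rule strict_antimono_on_elasticity_integral[OF differentiable_gg_pdf gg_pdf_pos has_real_derivative_gg_cdf
        continuous_on_gg_cdf _ tendsto_mult_gg_pdf_at_right_0 strict_antimono_on_elasticity_gg_pdf])
     (simp_all add: gg_cdf_def)

lemma elasticity_gg_cdf_pos: "u > 0 \<Longrightarrow> elasticity (gg_cdf a b \<alpha>) u > 0"
  using antiderivative_pos[OF has_real_derivative_gg_cdf gg_pdf_pos continuous_on_gg_cdf, of u]
    DERIV_imp_deriv[OF has_real_derivative_gg_cdf, of u] gg_pdf_pos[of u]
  by (simp add: elasticity_def gg_cdf_def)

lemma strict_antimono_on_elasticity_gg_pdf_tilde: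
  "strict_antimono_on {0<..} (elasticity (gg_pdf_tilde a b \<alpha>))"
proof -
  have "gg_pdf_tilde a b \<alpha> = (\<lambda>u. gg_pdf a b \<alpha> (\<alpha> / (4 * a * b) * u ^ 2))"
    by (simp add: fun_eq_iff gg_pdf_tilde_def)
  moreover have "strict_antimono_on {0<..} (elasticity (\<lambda>u. gg_pdf a b \<alpha> (\<alpha> / (4 * a * b) * u ^ 2)))"
    using a b \<alpha> differentiable_gg_pdf strict_antimono_on_elasticity_gg_pdf
    by (intro strict_antimono_on_elasticity_comp_scale_square) auto
  ultimately show ?thesis
    by simp
qed

lemma strict_antimono_on_log_derivative_gg_cdf:
  "strict_antimono_on {0<..} (\<lambda>u. deriv (gg_cdf a b \<alpha>) u / gg_cdf a b \<alpha> u)"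
  by (intro strict_antimono_on_log_derivative strict_antimono_on_elasticity_gg_cdf elasticity_gg_cdf_pos)

end

theorem theorem5:
  fixes a b \<alpha> :: real
  assumes "a > 0" and "b > 0" and "\<alpha> > 0"
  shows "strict_antimono_on {0<..}
           (\<lambda>u. u * deriv (gg_pdf_tilde a b \<alpha>) u / gg_pdf_tilde a b \<alpha> u)
       \<and> strict_antimono_on {0<..}
           (\<lambda>u. u * deriv (gg_pdf a b \<alpha>) u / gg_pdf a b \<alpha> u)
       \<and> strict_antimono_on {0<..}
           (\<lambda>u. u * deriv (gg_cdf a b \<alpha>) u / gg_cdf a b \<alpha> u)
       \<and> strict_antimono_on {0<..}
           (\<lambda>u. deriv (gg_cdf a b \<alpha>) u / gg_cdf a b \<alpha> u)"
  using strict_antimono_on_elasticity_gg_pdf_tilde[OF assms] strict_antimono_on_elasticity_gg_pdf[OF assms]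
    strict_antimono_on_elasticity_gg_cdf[OF assms] strict_antimono_on_log_derivative_gg_cdf[OF assms]
  unfolding elasticity_def[abs_def] by blast

end
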